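(* Let $\alpha\in(0,1)$ and let $(X_1,Y_1),\dots,(X_n,Y_n),(X_{n+1},Y_{n+1})$ be exchangeable random pairs in $\mathcal{X}\times\mathbb{R}$. Split the indices into a training set $\{1,\dots,n_0\}$ and a calibration set $\{n_0+1,\dots,n\}$ with $n_1=n-n_0\ge 1$. Suppose a family of prediction bands $\{[\hat q_{\mathrm{lo}}(x,t),\hat q_{\mathrm{hi}}(x,t)]\}_{t\in\mathcal{T}}$ is constructed by either of the two methods below (UACQR-S or UACQR-P) and define $$\hat t=\inf\Big\{t\in\mathcal{T}:\ \sum_{i=n_0+1}^{n}\mathbf{1}\{\hat q_{\mathrm{lo}}(X_i,t)\le Y_i\le \hat q_{\mathrm{hi}}(X_i,t)\}\ \ge (1-\alpha)(n_1+1)\Big\},$$ and $\hat C_n(X_{n+1})=[\hat q_{\mathrm{lo}}(X_{n+1},\hat t),\hat q_{\mathrm{hi}}(X_{n+1},\hat t)]$ (with $\hat C_n(X_{n+1})=\mathbb{R}$ if the set over which the infimum is taken is empty). UACQR-S: $\mathcal{T}=\mathbb{R}$ and $$\hat q_{\mathrm{lo}}(x,t)=\hat q_{Y\mid X}(x,\alpha_{\mathrm{lo}})-t\,\hat g_{\mathrm{lo}}(x),\qquad \hat q_{\mathrm{hi}}(x,t)=\hat q_{Y\mid X}(x,\alpha_{\mathrm{hi}})+t\,\hat g_{\mathrm{hi}}(x),$$ where $\hat q_{Y\mid X}(\cdot,\alpha_{\mathrm{lo}}),\hat q_{Y\mid X}(\cdot,\alpha_{\mathrm{hi}}):\mathcal{X}\to\mathbb{R}$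 are any functions and $\hat g_{\mathrm{lo}},\hat g_{\mathrm{hi}}:\mathcal{X}\to(0,\infty)$ are any strictly positive functions, all fitted using only the training data $\{(X_i,Y_i)\}_{i\le n_0}$ (and possibly independent auxiliary randomness). UACQR-P: given functions $\hat q^b_{Y\mid X}(\cdot,a):\mathcal{X}\to\mathbb{R}$ for $b=1,\dots,B$ and $a\in\{\alpha_{\mathrm{lo}},\alpha_{\mathrm{hi}}\}$, fitted using only the training data (and possibly independent auxiliary randomness), let $\hat q^{(1)}_{Y\mid X}(x,a)\le\dots\le\hat q^{(B)}_{Y\mid X}(x,a)$ be their order statistics at each $x$, set $\hat q^{(0)}_{Y\mid X}(x,a)=-\infty$, $\hat q^{(B+1)}_{Y\mid X}(x,a)=+\infty$, take $\mathcal{T}=\{0,1,\dots,B+1\}$ and $$\hat q_{\mathrm{lo}}(x,t)=\hat q^{(B+1-t)}_{Y\mid X}(x,\alpha_{\mathrm{lo}}),\qquad \hat q_{\mathrm{hi}}(x,t)=\hat q^{(t)}_{Y\mid X}(x,\alpha_{\mathrm{hi}}).$$ Then in both cases $\mathbb{P}\{Y_{n+1}\in\hat C_n(X_{n+1})\}\ge 1-\alpha$.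
   Context: $\alpha_{\mathrm{lo}},\alpha_{\mathrm{hi}}\in(0,1)$ are fixed target quantile levels (e.g. $\alpha/2$ and $1-\alpha/2$); the fitted functions are interpreted as estimates of conditional quantiles of $Y$ given $X$ (and $\hat g$ as estimates of their standard deviation), but no accuracy property is assumed. An interval $[a,b]$ with $a>b$ is empty, and an interval with endpoints $-\infty,+\infty$ is $\mathbb{R}$. Probability is over the joint draw of all $n+1$ data points and any auxiliary randomness. *)

theory Defs
  imports "HOL-Probability.Probability" "HOL-Combinatorics.Permutations"
begin

definition cov_count ::
  "('x \<Rightarrow> 't \<Rightarrow> ereal) \<Rightarrow> ('x \<Rightarrow> 't \<Rightarrow> ereal) \<Rightarrow> nat \<Rightarrow> nat
     \<Rightarrow> (nat \<Rightarrow> 'x) \<Rightarrow> (nat \<Rightarrow> real) \<Rightarrow> 't \<Rightarrow> nat" where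
  "cov_count lo hi n0 n xs ys t =
     card {i \<in> {n0<..n}. lo (xs i) t \<le> ereal (ys i) \<and> ereal (ys i) \<le> hi (xs i) t}"

definition conf_set ::
  "'t::conditionally_complete_linorder set \<Rightarrow> ('x \<Rightarrow> 't \<Rightarrow> ereal) \<Rightarrow> ('x \<Rightarrow> 't \<Rightarrow> ereal)
     \<Rightarrow> nat \<Rightarrow> nat \<Rightarrow> real \<Rightarrow> (nat \<Rightarrow> 'x) \<Rightarrow> (nat \<Rightarrow> real) \<Rightarrow> 'x \<Rightarrow> real set" where
  "conf_set T lo hi n0 n \<alpha> xs ys x =
     (let S = {t \<in> T. real (cov_count lo hi n0 n xs ys t) \<ge> (1 - \<alpha>) * (real (n - n0) + 1)}
      in if S = {} then UNIV
         else {y. lo x (Inf S) \<le> ereal y \<and> ereal y \<le> hi x (Inf S)})"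

definition uacqrS_set ::
  "('x \<Rightarrow> real) \<Rightarrow> ('x \<Rightarrow> real) \<Rightarrow> ('x \<Rightarrow> real) \<Rightarrow> ('x \<Rightarrow> real)
     \<Rightarrow> nat \<Rightarrow> nat \<Rightarrow> real \<Rightarrow> (nat \<Rightarrow> 'x) \<Rightarrow> (nat \<Rightarrow> real) \<Rightarrow> 'x \<Rightarrow> real set" where
  "uacqrS_set qlo qhi glo ghi n0 n \<alpha> xs ys x =
     conf_set (UNIV :: real set)
       (\<lambda>x t. ereal (qlo x - t * glo x)) (\<lambda>x t. ereal (qhi x + t * ghi x)) n0 n \<alpha> xs ys x"

definition ord_stat :: "nat \<Rightarrow> (nat \<Rightarrow> real) \<Rightarrow> nat \<Rightarrow> ereal" where
  "ord_stat B v k =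
     (if k = 0 then -\<infinity> else if k \<ge> B + 1 then \<infinity>
      else ereal (sort (map v [1..<B+1]) ! (k - 1)))"

definition uacqrP_set ::
  "nat \<Rightarrow> (nat \<Rightarrow> 'x \<Rightarrow> real) \<Rightarrow> (nat \<Rightarrow> 'x \<Rightarrow> real)
     \<Rightarrow> nat \<Rightarrow> nat \<Rightarrow> real \<Rightarrow> (nat \<Rightarrow> 'x) \<Rightarrow> (nat \<Rightarrow> real) \<Rightarrow> 'x \<Rightarrow> real set" where
  "uacqrP_set B qblo qbhi n0 n \<alpha> xs ys x =
     conf_set ({0..B+1} :: nat set)
       (\<lambda>x t. ord_stat B (\<lambda>b. qblo b x) (B + 1 - t))
       (\<lambda>x t. ord_stat B (\<lambda>b. qbhi b x) t) n0 n \<alpha> xs ys x"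

end

theory Submission
  imports Defs
begin

text \<open>Both families of bands are nested and increasing in \<open>t\<close>, so a band contains \<open>y\<close> at
level \<open>t\<close> exactly when a conformity score \<open>sc x y\<close> (the least level whose band contains \<open>y\<close>)
is at most \<open>t\<close>. Consequently \<open>Y\<^sub>n\<^sub>+\<^sub>1\<close> is covered iff fewer than \<open>(1-\<alpha>)(n\<^sub>1+1)\<close> calibration
scores lie strictly below the test score. The scores are computed from the training data only, so
the \<open>n\<^sub>1+1\<close> calibration and test points are exchangeable: swapping the test point with any
calibration point leaves the probability of non-coverage unchanged. Deterministically, at most
\<open>\<alpha>(n\<^sub>1+1)\<close> of the \<open>n\<^sub>1+1\<close> points can have \<open>(1-\<alpha>)(n\<^sub>1+1)\<close> scores strictly below them, and
averaging over the swaps bounds the non-coverage probability by \<open>\<alpha>\<close>.\<close>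

lemma card_high_rank_le:
  fixes s :: "'i \<Rightarrow> 'a::linorder" and k :: real
  assumes fin: "finite J" and k: "0 < k" "k \<le> real (card J)"
  shows "real (card {j\<in>J. k \<le> real (card {i\<in>J. s i < s j})}) \<le> real (card J) - k"
proof (cases "{j\<in>J. k \<le> real (card {i\<in>J. s i < s j})} = {}")
  case True
  show ?thesis unfolding True using k by simp
next
  case False
  define A where "A = {j\<in>J. k \<le> real (card {i\<in>J. s i < s j})}"
  have finA: "finite A" using fin unfolding A_def by simp
  have "A \<noteq> {}" using False unfolding A_def .
  then have "Min (s ` A) \<in> s ` A" using finA by simp
  then obtain j0 where j0: "j0 \<in> A" "s j0 = Min (s ` A)" by (metis imageE)
  define below where "below = {i\<in>J. s i < s j0}"
  have "k \<le> real (card below)" using j0(1) unfolding A_def below_def by simp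
  moreover have "card A + card below \<le> card J"
  proof -
    have "s j0 \<le> s i" if "i \<in> A" for i using j0(2) finA that by simp
    then have "A \<inter> below = {}" unfolding below_def by (auto dest: leD)
    then have "card A + card below = card (A \<union> below)"
      using finA fin by (simp add: card_Un_disjoint below_def)
    also have "\<dots> \<le> card J"
      using fin by (rule card_mono) (auto simp: A_def below_def)
    finally show ?thesis .
  qed
  ultimately show ?thesis unfolding A_def by linarith
qed

lemma card_Collect_permutes:
  assumes \<pi>: "\<pi> permutes J"
  shows "card {i\<in>J. P (\<pi> i)} = card {i\<in>J. P i}"
proof -
  have "bij_betw \<pi> {i\<in>J. P (\<pi> i)} {i\<in>J. P i}"
  proof (rule bij_betw_imageI)
    show "inj_on \<pi> {i\<in>J. P (\<pi> i)}" using permutes_inj[OF \<pi>] by (rule inj_on_subset) simp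
    show "\<pi> ` {i\<in>J. P (\<pi> i)} = {i\<in>J. P i}"
    proof
      show "\<pi> ` {i\<in>J. P (\<pi> i)} \<subseteq> {i\<in>J. P i}" using \<pi> by (auto simp: permutes_in_image)
      show "{i\<in>J. P i} \<subseteq> \<pi> ` {i\<in>J. P (\<pi> i)}"
      proof
        fix j assume "j \<in> {i\<in>J. P i}"
        moreover have "\<pi> (inv \<pi> j) = j" using permutes_inverses(1)[OF \<pi>] .
        moreover have "inv \<pi> j \<in> J \<longleftrightarrow> j \<in> J" using permutes_inv[OF \<pi>] by (simp add: permutes_in_image)
        ultimately show "j \<in> \<pi> ` {i\<in>J. P (\<pi> i)}" by (metis (mono_tags, lifting) image_eqI mem_Collect_eq)
      qed
    qed
  qed
  then show ?thesis by (rule bij_betw_same_card)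
qed

section \<open>Nested bands\<close>

definition calib_rank ::
  "('x \<Rightarrow> real \<Rightarrow> 't::linorder) \<Rightarrow> nat \<Rightarrow> nat \<Rightarrow> (nat \<Rightarrow> 'x) \<Rightarrow> (nat \<Rightarrow> real) \<Rightarrow> 'x \<Rightarrow> real \<Rightarrow> nat"
  where "calib_rank sc n0 n xs ys x y = card {i\<in>{n0<..n}. sc (xs i) (ys i) < sc x y}"

lemma card_less_lt_iff_le_Inf:
  fixes v :: "'i \<Rightarrow> 't::conditionally_complete_linorder"
  assumes C: "finite C" and K: "0 < K" and vT: "\<And>i. i \<in> C \<Longrightarrow> v i \<in> T"
  defines "S \<equiv> {t\<in>T. K \<le> real (card {i\<in>C. v i \<le> t})}"
  shows "real (card {i\<in>C. v i < s}) < K \<longleftrightarrow> S = {} \<or> s \<le> Inf S"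
proof
  assume lt: "real (card {i\<in>C. v i < s}) < K"
  have "s \<le> t" if "t \<in> S" for t
  proof (rule ccontr)
    assume "\<not> s \<le> t"
    then have "card {i\<in>C. v i \<le> t} \<le> card {i\<in>C. v i < s}"
      using C by (intro card_mono) auto
    then show False using that lt unfolding S_def by simp
  qed
  then show "S = {} \<or> s \<le> Inf S" by (metis cInf_greatest)
next
  assume S: "S = {} \<or> s \<le> Inf S"
  show "real (card {i\<in>C. v i < s}) < K"
  proof (rule ccontr)
    define F where "F = {i\<in>C. v i < s}"
    assume "\<not> ?thesis"
    then have KF: "K \<le> real (card F)" unfolding F_def by simp
    then have "F \<noteq> {}" using K by auto
    moreover have finF: "finite F" using C unfolding F_def by simp
    ultimately have "Max (v ` F) \<in> v ` F" by simp
    then obtain i0 where i0: "i0 \<in> F" "v i0 = Max (v ` F)" by (metis imageE)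
    have "card F \<le> card {i\<in>C. v i \<le> v i0}"
      using C finF i0 by (intro card_mono) (auto simp: F_def)
    moreover have "v i0 \<in> T" using i0(1) vT unfolding F_def by simp
    ultimately have "v i0 \<in> S" using KF unfolding S_def by simp
    moreover have "bdd_below S"
    proof
      fix t assume "t \<in> S"
      then have "{i\<in>C. v i \<le> t} \<noteq> {}" using K unfolding S_def by (metis (no_types) card.empty
          mem_Collect_eq not_le of_nat_0)
      then obtain i where "i \<in> C" "v i \<le> t" by blast
      then show "Min (v ` C) \<le> t" using C by (meson Min_le finite_imageI imageI order_trans)
    qed
    ultimately have "Inf S \<le> v i0" by (rule cInf_lower)
    moreover have "v i0 < s" using i0 unfolding F_def by simp
    ultimately show False using S \<open>v i0 \<in> S\<close> by auto
  qed
qed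

lemma mem_conf_set_iff_calib_rank:
  fixes T :: "'t::conditionally_complete_linorder set" and sc :: "'x \<Rightarrow> real \<Rightarrow> 't"
  assumes band: "\<And>x y t. t \<in> T \<Longrightarrow> (lo x t \<le> ereal y \<and> ereal y \<le> hi x t) \<longleftrightarrow> sc x y \<le> t"
    and sc_T: "\<And>x y. sc x y \<in> T"
    and Inf_T: "\<And>S. S \<subseteq> T \<Longrightarrow> S \<noteq> {} \<Longrightarrow> Inf S \<in> T"
    and \<alpha>: "\<alpha> < 1"
  shows "y \<in> conf_set T lo hi n0 n \<alpha> xs ys x \<longleftrightarrow>
    real (calib_rank sc n0 n xs ys x y) < (1 - \<alpha>) * (real (n - n0) + 1)"
proof -
  define K where "K = (1 - \<alpha>) * (real (n - n0) + 1)"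
  define S where "S = {t\<in>T. K \<le> real (card {i\<in>{n0<..n}. sc (xs i) (ys i) \<le> t})}"
  have "{t \<in> T. (1 - \<alpha>) * (real (n - n0) + 1) \<le> real (cov_count lo hi n0 n xs ys t)} = S"
    unfolding S_def K_def cov_count_def using band by auto
  then have "y \<in> conf_set T lo hi n0 n \<alpha> xs ys x \<longleftrightarrow> S = {} \<or> sc x y \<le> Inf S"
    unfolding conf_set_def Let_def using band Inf_T[of S] by (auto simp: S_def)
  also have "\<dots> \<longleftrightarrow> real (calib_rank sc n0 n xs ys x y) < K"
    unfolding S_def calib_rank_def
    by (rule card_less_lt_iff_le_Inf[symmetric]) (use \<alpha> sc_T in \<open>auto simp: K_def\<close>)
  finally show ?thesis unfolding K_def .
qed

lemma sorted_nth_le_iff_card: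
  fixes xs :: "'a::linorder list"
  assumes sorted: "sorted xs" and k: "k < length xs"
  shows "xs ! k \<le> y \<longleftrightarrow> Suc k \<le> card {i. i < length xs \<and> xs ! i \<le> y}"
proof
  assume "xs ! k \<le> y"
  then have "xs ! i \<le> y" if "i \<le> k" for i
    using sorted_nth_mono[OF sorted that k] by simp
  then have "{0..<Suc k} \<subseteq> {i. i < length xs \<and> xs ! i \<le> y}" using k by auto
  from card_mono[OF _ this] show "Suc k \<le> card {i. i < length xs \<and> xs ! i \<le> y}" by simp
next
  assume card: "Suc k \<le> card {i. i < length xs \<and> xs ! i \<le> y}"
  show "xs ! k \<le> y"
  proof (rule ccontr)
    assume "\<not> xs ! k \<le> y"
    then have "i < k" if "i < length xs" "xs ! i \<le> y" for i
      using sorted_nth_mono[OF sorted, of k i] that by (meson dual_order.trans not_le)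
    then have "{i. i < length xs \<and> xs ! i \<le> y} \<subseteq> {0..<k}" by auto
    from card_mono[OF _ this] card show False by simp
  qed
qed

lemma le_sorted_nth_iff_card:
  fixes xs :: "'a::linorder list"
  assumes sorted: "sorted xs" and k: "k < length xs"
  shows "y \<le> xs ! k \<longleftrightarrow> card {i. i < length xs \<and> xs ! i < y} \<le> k"
proof
  assume "y \<le> xs ! k"
  then have "i < k" if "i < length xs" "xs ! i < y" for i
    using sorted_nth_mono[OF sorted, of k i] that by (meson leD leI order_trans)
  then have "{i. i < length xs \<and> xs ! i < y} \<subseteq> {0..<k}" by auto
  from card_mono[OF _ this] show "card {i. i < length xs \<and> xs ! i < y} \<le> k" by simp
next
  assume card: "card {i. i < length xs \<and> xs ! i < y} \<le> k"
  show "y \<le> xs ! k"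
  proof (rule ccontr)
    assume "\<not> y \<le> xs ! k"
    then have "xs ! i < y" if "i \<le> k" for i
      using sorted_nth_mono[OF sorted that k] by simp
    then have "{0..<Suc k} \<subseteq> {i. i < length xs \<and> xs ! i < y}" using k by auto
    from card_mono[OF _ this] card show False by simp
  qed
qed
lemma card_nth_sort_map_upt:
  "card {i. i < length (sort (map v [1..<B+1])) \<and> P (sort (map v [1..<B+1]) ! i)}
     = card {b\<in>{1..B}. P (v b)}"
proof -
  have "card {i. i < length (sort (map v [1..<B+1])) \<and> P (sort (map v [1..<B+1]) ! i)}
      = length (filter P (map v [1..<B+1]))"
    by (metis filter_sort length_filter_conv_card length_sort)
  also have "\<dots> = card (set (filter (P \<circ> v) [1..<B+1]))"
    by (simp only: filter_map length_map distinct_card distinct_filter distinct_upt)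
  also have "set (filter (P \<circ> v) [1..<B+1]) = {b\<in>{1..B}. P (v b)}" by (auto simp del: upt_Suc)
  finally show ?thesis .
qed

lemma ord_stat_le_ereal_iff:
  "ord_stat B v k \<le> ereal y \<longleftrightarrow> k = 0 \<or> (k \<le> B \<and> k \<le> card {b\<in>{1..B}. v b \<le> y})"
proof (cases "0 < k \<and> k \<le> B")
  case True
  define xs where "xs = sort (map v [1..<B+1])"
  have "sorted xs" "k - 1 < length xs" using True by (auto simp: xs_def)
  moreover have "ord_stat B v k = ereal (xs ! (k - 1))" using True by (simp add: ord_stat_def xs_def)
  moreover have "card {i. i < length xs \<and> xs ! i \<le> y} = card {b\<in>{1..B}. v b \<le> y}"
    unfolding xs_def by (rule card_nth_sort_map_upt)
  ultimately show ?thesis using sorted_nth_le_iff_card[of xs "k - 1" y] True by simp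
qed (auto simp: ord_stat_def)

lemma ereal_le_ord_stat_iff:
  "ereal y \<le> ord_stat B v k \<longleftrightarrow> B + 1 \<le> k \<or> (k \<noteq> 0 \<and> card {b\<in>{1..B}. v b < y} < k)"
proof (cases "0 < k \<and> k \<le> B")
  case True
  define xs where "xs = sort (map v [1..<B+1])"
  have "sorted xs" "k - 1 < length xs" using True by (auto simp: xs_def)
  moreover have "ord_stat B v k = ereal (xs ! (k - 1))" using True by (simp add: ord_stat_def xs_def)
  moreover have "card {i. i < length xs \<and> xs ! i < y} = card {b\<in>{1..B}. v b < y}"
    unfolding xs_def by (rule card_nth_sort_map_upt)
  ultimately show ?thesis using le_sorted_nth_iff_card[of xs "k - 1" y] True by auto
qed (auto simp: ord_stat_def)

section \<open>Conformity scores of UACQR-S and UACQR-P\<close>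

text \<open>The least level \<open>t\<close> whose UACQR-S band at \<open>x\<close> contains \<open>y\<close>.\<close>

definition uacqrS_score ::
  "('x \<Rightarrow> real) \<Rightarrow> ('x \<Rightarrow> real) \<Rightarrow> ('x \<Rightarrow> real) \<Rightarrow> ('x \<Rightarrow> real) \<Rightarrow> 'x \<Rightarrow> real \<Rightarrow> real"
  where "uacqrS_score qlo qhi glo ghi x y = max ((qlo x - y) / glo x) ((y - qhi x) / ghi x)"

text \<open>For UACQR-P the band at level \<open>t\<close> contains \<open>y\<close> iff \<open>t\<close> is at least the natural-number
score \<open>max (B + 1 - #{b. q\<^sup>b\<^sub>l\<^sub>o \<le> y}) (#{b. q\<^sup>b\<^sub>h\<^sub>i < y} + 1)\<close>, whose real cast is \<open>uacqrP_score\<close>.\<close>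

definition uacqrP_score ::
  "nat \<Rightarrow> (nat \<Rightarrow> 'x \<Rightarrow> real) \<Rightarrow> (nat \<Rightarrow> 'x \<Rightarrow> real) \<Rightarrow> 'x \<Rightarrow> real \<Rightarrow> real"
  where "uacqrP_score B qblo qbhi x y =
    max (real B + 1 - real (card {b\<in>{1..B}. qblo b x \<le> y}))
        (real (card {b\<in>{1..B}. qbhi b x < y}) + 1)"

lemma mem_uacqrS_set_iff:
  assumes "\<And>x. glo x > 0" "\<And>x. ghi x > 0" and "\<alpha> < 1"
  shows "y \<in> uacqrS_set qlo qhi glo ghi n0 n \<alpha> xs ys x \<longleftrightarrow>
    real (calib_rank (uacqrS_score qlo qhi glo ghi) n0 n xs ys x y) < (1 - \<alpha>) * (real (n - n0) + 1)"
  unfolding uacqrS_set_def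
proof (rule mem_conf_set_iff_calib_rank)
  fix x y and t :: real
  show "(ereal (qlo x - t * glo x) \<le> ereal y \<and> ereal y \<le> ereal (qhi x + t * ghi x))
      \<longleftrightarrow> uacqrS_score qlo qhi glo ghi x y \<le> t"
    using assms(1,2)[of x] by (simp add: uacqrS_score_def pos_divide_le_eq algebra_simps)
qed (use assms(3) in auto)

lemma mem_uacqrP_set_iff:
  assumes "\<alpha> < 1"
  shows "y \<in> uacqrP_set B qblo qbhi n0 n \<alpha> xs ys x \<longleftrightarrow>
    real (calib_rank (uacqrP_score B qblo qbhi) n0 n xs ys x y) < (1 - \<alpha>) * (real (n - n0) + 1)"
proof -
  define cL where "cL x y = card {b\<in>{1..B}. qblo b x \<le> y}" for x y
  define cH where "cH x y = card {b\<in>{1..B}. qbhi b x < y}" for x y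
  define sc where "sc x y = max (B + 1 - cL x y) (Suc (cH x y))" for x y
  have cL_le: "cL x y \<le> B" and cH_le: "cH x y \<le> B" for x y
    unfolding cL_def cH_def by (auto intro: card_mono[of "{1..B}", simplified])
  have "uacqrP_score B qblo qbhi x y = real (sc x y)" for x y
    using cL_le[of x y] by (simp add: uacqrP_score_def sc_def cL_def cH_def of_nat_diff)
  then have "calib_rank (uacqrP_score B qblo qbhi) n0 n xs ys x y = calib_rank sc n0 n xs ys x y"
    by (simp add: calib_rank_def)
  moreover have "y \<in> uacqrP_set B qblo qbhi n0 n \<alpha> xs ys x \<longleftrightarrow>
    real (calib_rank sc n0 n xs ys x y) < (1 - \<alpha>) * (real (n - n0) + 1)"
    unfolding uacqrP_set_def
  proof (rule mem_conf_set_iff_calib_rank)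
    fix x y and t :: nat assume t: "t \<in> {0..B+1}"
    have "ord_stat B (\<lambda>b. qblo b x) (B + 1 - t) \<le> ereal y \<longleftrightarrow> B + 1 - cL x y \<le> t"
      using ord_stat_le_ereal_iff[of B _ "B + 1 - t" y] t cL_le[of x y] by (auto simp: cL_def)
    moreover have "ereal y \<le> ord_stat B (\<lambda>b. qbhi b x) t \<longleftrightarrow> Suc (cH x y) \<le> t"
      using ereal_le_ord_stat_iff[of y B _ t] t cH_le[of x y] by (auto simp: cH_def)
    ultimately show "(ord_stat B (\<lambda>b. qblo b x) (B + 1 - t) \<le> ereal y \<and> ereal y \<le> ord_stat B (\<lambda>b. qbhi b x) t)
        \<longleftrightarrow> sc x y \<le> t"
      by (simp add: sc_def)
  next
    fix x y show "sc x y \<in> {0..B+1}" using cH_le[of x y] by (auto simp: sc_def)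
  next
    fix S :: "nat set" assume "S \<subseteq> {0..B+1}" "S \<noteq> {}"
    then show "Inf S \<in> {0..B+1}" using Inf_nat_def1 by blast
  qed (use assms in auto)
  ultimately show ?thesis by simp
qed

lemma borel_measurable_card_Collect:
  fixes A :: "nat set"
  assumes "\<And>b. b \<in> A \<Longrightarrow> {p \<in> space N. P b p} \<in> sets N"
  shows "(\<lambda>p. real (card {b\<in>A. P b p})) \<in> borel_measurable N"
proof -
  have "{p \<in> space N. b \<in> {b\<in>A. P b p}} \<in> sets N" for b
    using assms[of b] by (cases "b \<in> A") auto
  then have "(\<lambda>p. card {b\<in>A. P b p}) \<in> measurable N (count_space UNIV)"
    by (rule measurable_card)
  then show ?thesis by (rule measurable_compose) simp
qed

lemma borel_measurable_fitted:
  assumes "(\<lambda>(d, u, x). f d u x) \<in> borel_measurable (D \<Otimes>\<^sub>M (MU \<Otimes>\<^sub>M MX))"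
  shows "(\<lambda>p. f (fst p) (fst (snd p)) (fst (snd (snd p))))
    \<in> borel_measurable (D \<Otimes>\<^sub>M (MU \<Otimes>\<^sub>M (MX \<Otimes>\<^sub>M (borel :: real measure))))"
proof -
  have "(\<lambda>p. (fst p, fst (snd p), fst (snd (snd p))))
      \<in> measurable (D \<Otimes>\<^sub>M (MU \<Otimes>\<^sub>M (MX \<Otimes>\<^sub>M (borel :: real measure)))) (D \<Otimes>\<^sub>M (MU \<Otimes>\<^sub>M MX))"
    by measurable
  from measurable_compose[OF this assms] show ?thesis by (simp add: split_beta)
qed

lemma borel_measurable_uacqrS_score:
  assumes "(\<lambda>(d, u, x). qlo d u x) \<in> borel_measurable (D \<Otimes>\<^sub>M (MU \<Otimes>\<^sub>M MX))"
    and "(\<lambda>(d, u, x). qhi d u x) \<in> borel_measurable (D \<Otimes>\<^sub>M (MU \<Otimes>\<^sub>M MX))"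
    and "(\<lambda>(d, u, x). glo d u x) \<in> borel_measurable (D \<Otimes>\<^sub>M (MU \<Otimes>\<^sub>M MX))"
    and "(\<lambda>(d, u, x). ghi d u x) \<in> borel_measurable (D \<Otimes>\<^sub>M (MU \<Otimes>\<^sub>M MX))"
  shows "(\<lambda>(d, u, x, y). uacqrS_score (qlo d u) (qhi d u) (glo d u) (ghi d u) x y)
    \<in> borel_measurable (D \<Otimes>\<^sub>M (MU \<Otimes>\<^sub>M (MX \<Otimes>\<^sub>M borel)))"
  unfolding split_beta' uacqrS_score_def using assms[THEN borel_measurable_fitted]
  by (intro borel_measurable_max borel_measurable_divide borel_measurable_diff) (simp_all add: split_beta')

lemma borel_measurable_uacqrP_score:
  assumes "\<And>b. b \<in> {1..B} \<Longrightarrow> (\<lambda>(d, u, x). qblo b d u x) \<in> borel_measurable (D \<Otimes>\<^sub>M (MU \<Otimes>\<^sub>M MX))"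
    and "\<And>b. b \<in> {1..B} \<Longrightarrow> (\<lambda>(d, u, x). qbhi b d u x) \<in> borel_measurable (D \<Otimes>\<^sub>M (MU \<Otimes>\<^sub>M MX))"
  shows "(\<lambda>(d, u, x, y). uacqrP_score B (\<lambda>b. qblo b d u) (\<lambda>b. qbhi b d u) x y)
    \<in> borel_measurable (D \<Otimes>\<^sub>M (MU \<Otimes>\<^sub>M (MX \<Otimes>\<^sub>M borel)))"
  unfolding split_beta' uacqrP_score_def
  using assms[THEN borel_measurable_fitted]
  by (intro borel_measurable_max borel_measurable_diff borel_measurable_add borel_measurable_const
      borel_measurable_card_Collect borel_measurable_le borel_measurable_less)
    (simp_all add: split_beta')

section \<open>Exchangeability\<close>

lemma distr_permute_with_independent:
  fixes Z :: "'i \<Rightarrow> 'w \<Rightarrow> 'z"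
  assumes "prob_space M"
    and Z: "\<And>i. i \<in> I \<Longrightarrow> Z i \<in> measurable M N" and U: "U \<in> measurable M MU"
    and \<pi>: "\<pi> permutes I"
    and exch: "distr M (PiM I (\<lambda>_. N)) (\<lambda>\<omega>. \<lambda>i\<in>I. Z (\<pi> i) \<omega>)
      = distr M (PiM I (\<lambda>_. N)) (\<lambda>\<omega>. \<lambda>i\<in>I. Z i \<omega>)"
    and indep: "distr M (PiM I (\<lambda>_. N) \<Otimes>\<^sub>M MU) (\<lambda>\<omega>. (\<lambda>i\<in>I. Z i \<omega>, U \<omega>))
      = distr M (PiM I (\<lambda>_. N)) (\<lambda>\<omega>. \<lambda>i\<in>I. Z i \<omega>) \<Otimes>\<^sub>M distr M MU U"
  shows "distr M (PiM I (\<lambda>_. N) \<Otimes>\<^sub>M MU) (\<lambda>\<omega>. (\<lambda>i\<in>I. Z (\<pi> i) \<omega>, U \<omega>))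
    = distr M (PiM I (\<lambda>_. N) \<Otimes>\<^sub>M MU) (\<lambda>\<omega>. (\<lambda>i\<in>I. Z i \<omega>, U \<omega>))"
proof -
  interpret prob_space M by fact
  define MI where "MI = PiM I (\<lambda>_. N)"
  define Zv where "Zv \<omega> = (\<lambda>i\<in>I. Z i \<omega>)" for \<omega>
  define perm where "perm z = (\<lambda>i\<in>I. z (\<pi> i))" for z :: "'i \<Rightarrow> 'z"
  have Zv: "Zv \<in> measurable M MI" unfolding Zv_def MI_def by (rule measurable_restrict) (rule Z)
  have perm: "perm \<in> measurable MI MI"
    unfolding perm_def MI_def using \<pi>
    by (intro measurable_restrict measurable_component_singleton) (simp add: permutes_in_image)
  have perm_Zv: "(\<lambda>i\<in>I. Z (\<pi> i) \<omega>) = perm (Zv \<omega>)" for \<omega>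
    unfolding perm_def Zv_def using \<pi> by (auto simp: permutes_in_image)
  have perm_pair: "(\<lambda>(z, u). (perm z, id u)) \<in> measurable (MI \<Otimes>\<^sub>M MU) (MI \<Otimes>\<^sub>M MU)"
    unfolding split_beta' id_def by (intro measurable_Pair measurable_compose[OF measurable_fst perm] measurable_snd)
  have "distr (distr M MI Zv) MI perm = distr M MI (perm \<circ> Zv)" by (rule distr_distr[OF perm Zv])
  also have "perm \<circ> Zv = (\<lambda>\<omega>. \<lambda>i\<in>I. Z (\<pi> i) \<omega>)" using perm_Zv by (simp add: fun_eq_iff)
  also have "distr M MI (\<lambda>\<omega>. \<lambda>i\<in>I. Z (\<pi> i) \<omega>) = distr M MI Zv"
    using exch unfolding MI_def Zv_def .
  finally have L: "distr (distr M MI Zv) MI perm = distr M MI Zv" .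
  have U_id: "distr (distr M MU U) MU id = distr M MU U" by (simp add: id_def distr_id2)
  have sf: "sigma_finite_measure (distr (distr M MU U) MU id)"
    unfolding U_id by (rule prob_space_imp_sigma_finite) (simp add: prob_space_distr U)
  have "distr M (MI \<Otimes>\<^sub>M MU) (\<lambda>\<omega>. (perm (Zv \<omega>), U \<omega>))
      = distr (distr M (MI \<Otimes>\<^sub>M MU) (\<lambda>\<omega>. (Zv \<omega>, U \<omega>))) (MI \<Otimes>\<^sub>M MU) (\<lambda>(z, u). (perm z, id u))"
    by (subst distr_distr[OF perm_pair]) (auto simp: comp_def intro: measurable_Pair Zv U)
  also have "\<dots> = distr (distr M MI Zv \<Otimes>\<^sub>M distr M MU U) (MI \<Otimes>\<^sub>M MU) (\<lambda>(z, u). (perm z, id u))"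
    using indep unfolding MI_def Zv_def by simp
  also have "\<dots> = distr (distr M MI Zv) MI perm \<Otimes>\<^sub>M distr (distr M MU U) MU id"
    by (rule pair_measure_distr[symmetric]) (use perm sf in \<open>simp_all add: id_def\<close>)
  also have "\<dots> = distr M MI Zv \<Otimes>\<^sub>M distr M MU U" by (simp only: L U_id)
  also have "\<dots> = distr M (MI \<Otimes>\<^sub>M MU) (\<lambda>\<omega>. (Zv \<omega>, U \<omega>))"
    using indep unfolding MI_def Zv_def by simp
  finally show ?thesis by (simp add: perm_Zv MI_def Zv_def)
qed

lemma (in prob_space) prob_high_rank_le:
  fixes s :: "'i \<Rightarrow> 'a \<Rightarrow> real"
  assumes J: "finite J" "j0 \<in> J" and K: "0 < K" "K \<le> real (card J)"
    and events: "\<And>j. j \<in> J \<Longrightarrow> {\<omega>\<in>space M. K \<le> real (card {i\<in>J. s i \<omega> < s j \<omega>})} \<in> events"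
    and same_prob: "\<And>j. j \<in> J \<Longrightarrow> prob {\<omega>\<in>space M. K \<le> real (card {i\<in>J. s i \<omega> < s j \<omega>})}
      = prob {\<omega>\<in>space M. K \<le> real (card {i\<in>J. s i \<omega> < s j0 \<omega>})}"
  shows "real (card J) * prob {\<omega>\<in>space M. K \<le> real (card {i\<in>J. s i \<omega> < s j0 \<omega>})} \<le> real (card J) - K"
proof -
  define A where "A j = {\<omega>\<in>space M. K \<le> real (card {i\<in>J. s i \<omega> < s j \<omega>})}" for j
  have int_A: "integrable M (indicator (A j) :: 'a \<Rightarrow> real)" if "j \<in> J" for j
    using events[OF that] by (auto intro!: integrable_real_indicator simp: A_def emeasure_eq_measure)
  have A_space: "A j \<inter> space M = A j" for j by (auto simp: A_def)
  have "real (card J) * prob (A j0) = (\<Sum>j\<in>J. prob (A j))"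
    using same_prob by (simp add: A_def)
  also have "\<dots> = (\<integral>\<omega>. (\<Sum>j\<in>J. indicator (A j) \<omega>) \<partial>M)"
    using int_A by (simp add: Bochner_Integration.integral_sum A_space)
  also have "\<dots> \<le> (\<integral>\<omega>. real (card J) - K \<partial>M)"
  proof (rule integral_mono)
    fix \<omega> assume "\<omega> \<in> space M"
    then have "(\<Sum>j\<in>J. indicator (A j) \<omega> :: real) = real (card {j\<in>J. K \<le> real (card {i\<in>J. s i \<omega> < s j \<omega>})})"
      using J by (simp add: A_def indicator_def Int_def conj_commute)
    then show "(\<Sum>j\<in>J. indicator (A j) \<omega>) \<le> real (card J) - K"
      using card_high_rank_le[OF J(1) K] by simp
  qed (use int_A in auto)
  finally show ?thesis by (simp add: A_def prob_space)
qed

definition split_score ::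
  "nat \<Rightarrow> ((nat \<Rightarrow> 'x \<times> real) \<Rightarrow> 'u \<Rightarrow> 'x \<Rightarrow> real \<Rightarrow> real) \<Rightarrow> (nat \<Rightarrow> 'x \<times> real) \<times> 'u \<Rightarrow> nat \<Rightarrow> real"
  where "split_score n0 G p i = G (restrict (fst p) {1..n0}) (snd p) (fst (fst p i)) (snd (fst p i))"

locale exchangeable_sample = prob_space M
  for M :: "'w measure" and MX :: "'x measure" and MU :: "'u measure"
    and X :: "nat \<Rightarrow> 'w \<Rightarrow> 'x" and Y :: "nat \<Rightarrow> 'w \<Rightarrow> real" and U :: "'w \<Rightarrow> 'u" and n :: nat +
  assumes X_meas: "\<forall>i\<in>{1..Suc n}. X i \<in> measurable M MX"
    and Y_meas: "\<forall>i\<in>{1..Suc n}. Y i \<in> borel_measurable M"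
    and U_meas: "U \<in> measurable M MU"
    and exch: "\<forall>\<pi>. \<pi> permutes {1..Suc n} \<longrightarrow>
        distr M (PiM {1..Suc n} (\<lambda>_. MX \<Otimes>\<^sub>M borel))
          (\<lambda>\<omega>. \<lambda>i\<in>{1..Suc n}. (X (\<pi> i) \<omega>, Y (\<pi> i) \<omega>))
        = distr M (PiM {1..Suc n} (\<lambda>_. MX \<Otimes>\<^sub>M borel))
          (\<lambda>\<omega>. \<lambda>i\<in>{1..Suc n}. (X i \<omega>, Y i \<omega>))"
    and U_indep: "distr M (PiM {1..Suc n} (\<lambda>_. MX \<Otimes>\<^sub>M borel) \<Otimes>\<^sub>M MU)
          (\<lambda>\<omega>. (\<lambda>i\<in>{1..Suc n}. (X i \<omega>, Y i \<omega>), U \<omega>))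
        = distr M (PiM {1..Suc n} (\<lambda>_. MX \<Otimes>\<^sub>M borel)) (\<lambda>\<omega>. \<lambda>i\<in>{1..Suc n}. (X i \<omega>, Y i \<omega>))
          \<Otimes>\<^sub>M distr M MU U"
begin

abbreviation "data_measure \<equiv> PiM {1..Suc n} (\<lambda>_. MX \<Otimes>\<^sub>M (borel :: real measure))"

definition permuted_sample :: "(nat \<Rightarrow> nat) \<Rightarrow> 'w \<Rightarrow> (nat \<Rightarrow> 'x \<times> real) \<times> 'u"
  where "permuted_sample \<pi> \<omega> = (\<lambda>i\<in>{1..Suc n}. (X (\<pi> i) \<omega>, Y (\<pi> i) \<omega>), U \<omega>)"

lemma permuted_sample_measurable:
  assumes "\<pi> permutes {1..Suc n}"
  shows "permuted_sample \<pi> \<in> measurable M (data_measure \<Otimes>\<^sub>M MU)"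
proof -
  have "\<pi> i \<in> {1..Suc n}" if "i \<in> {1..Suc n}" for i
    using assms that by (simp only: permutes_in_image)
  then show ?thesis
    unfolding permuted_sample_def[abs_def] using X_meas Y_meas U_meas
    by (intro measurable_Pair measurable_restrict) auto
qed

lemma prob_permuted_sample:
  assumes \<pi>: "\<pi> permutes {1..Suc n}" and Q: "Q \<in> sets (data_measure \<Otimes>\<^sub>M MU)"
  shows "prob {\<omega>\<in>space M. permuted_sample \<pi> \<omega> \<in> Q} = prob {\<omega>\<in>space M. permuted_sample id \<omega> \<in> Q}"
proof -
  have Z: "(\<lambda>\<omega>. (X i \<omega>, Y i \<omega>)) \<in> measurable M (MX \<Otimes>\<^sub>M borel)" if "i \<in> {1..Suc n}" for i
    using X_meas Y_meas that by (auto intro: measurable_Pair)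
  have "distr M (data_measure \<Otimes>\<^sub>M MU) (\<lambda>\<omega>. (\<lambda>i\<in>{1..Suc n}. (X (\<pi> i) \<omega>, Y (\<pi> i) \<omega>), U \<omega>))
      = distr M (data_measure \<Otimes>\<^sub>M MU) (\<lambda>\<omega>. (\<lambda>i\<in>{1..Suc n}. (X i \<omega>, Y i \<omega>), U \<omega>))"
    by (rule distr_permute_with_independent[where Z = "\<lambda>i \<omega>. (X i \<omega>, Y i \<omega>)",
          OF prob_space_axioms Z U_meas \<pi> exch[rule_format, OF \<pi>] U_indep])
  then have "distr M (data_measure \<Otimes>\<^sub>M MU) (permuted_sample \<pi>) = distr M (data_measure \<Otimes>\<^sub>M MU) (permuted_sample id)"
    by (simp add: permuted_sample_def[abs_def])
  then show ?thesis
    using measure_distr[OF permuted_sample_measurable[OF \<pi>] Q]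
      measure_distr[OF permuted_sample_measurable[OF permutes_id] Q]
    by (simp add: vimage_def Int_def conj_commute)
qed

lemma split_score_measurable:
  assumes i: "i \<in> {1..Suc n}" and n0: "n0 \<le> Suc n"
    and G_meas: "(\<lambda>(d, u, x, y). G d u x y) \<in> borel_measurable
        (PiM {1..n0} (\<lambda>_. MX \<Otimes>\<^sub>M borel) \<Otimes>\<^sub>M (MU \<Otimes>\<^sub>M (MX \<Otimes>\<^sub>M borel)))"
  shows "(\<lambda>p. split_score n0 G p i) \<in> borel_measurable (data_measure \<Otimes>\<^sub>M MU)"
proof -
  have "(\<lambda>p. restrict (fst p) {1..n0}) \<in> measurable (data_measure \<Otimes>\<^sub>M MU) (PiM {1..n0} (\<lambda>_. MX \<Otimes>\<^sub>M borel))"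
    using n0 by (intro measurable_compose[OF measurable_fst measurable_restrict_subset]) auto
  moreover have "(\<lambda>p. fst p i) \<in> measurable (data_measure \<Otimes>\<^sub>M MU) (MX \<Otimes>\<^sub>M borel)"
    using i by (intro measurable_compose[OF measurable_fst measurable_component_singleton])
  ultimately have "(\<lambda>p. (restrict (fst p) {1..n0}, snd p, fst p i))
      \<in> measurable (data_measure \<Otimes>\<^sub>M MU) (PiM {1..n0} (\<lambda>_. MX \<Otimes>\<^sub>M borel) \<Otimes>\<^sub>M (MU \<Otimes>\<^sub>M (MX \<Otimes>\<^sub>M borel)))"
    by (intro measurable_Pair measurable_snd)
  from measurable_compose[OF this G_meas] show ?thesis by (simp add: split_score_def split_beta)
qed

lemma split_score_permuted_sample:
  assumes \<pi>: "\<pi> permutes {1..Suc n}" and fixes_training: "\<And>i. i \<in> {1..n0} \<Longrightarrow> \<pi> i = i"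
    and i: "i \<in> {1..Suc n}" and n0: "n0 \<le> Suc n"
  shows "split_score n0 G (permuted_sample \<pi> \<omega>) i = split_score n0 G (permuted_sample id \<omega>) (\<pi> i)"
proof -
  have "restrict (fst (permuted_sample \<pi> \<omega>)) {1..n0} = restrict (fst (permuted_sample id \<omega>)) {1..n0}"
    using fixes_training n0 by (auto simp: permuted_sample_def fun_eq_iff)
  moreover have "\<pi> i \<in> {1..Suc n}" using \<pi> i by (simp only: permutes_in_image)
  then have "fst (permuted_sample \<pi> \<omega>) i = fst (permuted_sample id \<omega>) (\<pi> i)"
    using i by (simp add: permuted_sample_def)
  ultimately show ?thesis by (simp add: split_score_def permuted_sample_def)
qed

definition rank_event ::
  "nat \<Rightarrow> ((nat \<Rightarrow> 'x \<times> real) \<Rightarrow> 'u \<Rightarrow> 'x \<Rightarrow> real \<Rightarrow> real) \<Rightarrow> real \<Rightarrow> nat \<Rightarrow> 'w set"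
  where "rank_event n0 G K j = {\<omega>\<in>space M. K \<le> real (card {i\<in>{n0<..Suc n}.
    split_score n0 G (permuted_sample id \<omega>) i < split_score n0 G (permuted_sample id \<omega>) j})}"

text \<open>Swapping point \<open>j\<close> with the test point \<open>n + 1\<close> moves the rank event of \<open>j\<close> onto the
rank event of the test point, and exchangeability preserves its probability.\<close>

lemma rank_event_swap:
  assumes j: "j \<in> {n0<..Suc n}" and split: "n0 < n"
    and G_meas: "(\<lambda>(d, u, x, y). G d u x y) \<in> borel_measurable
        (PiM {1..n0} (\<lambda>_. MX \<Otimes>\<^sub>M borel) \<Otimes>\<^sub>M (MU \<Otimes>\<^sub>M (MX \<Otimes>\<^sub>M borel)))"
  shows "rank_event n0 G K j \<in> events"
    and "prob (rank_event n0 G K j) = prob (rank_event n0 G K (Suc n))"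
proof -
  define J where "J = {n0<..Suc n}"
  define Q where "Q = {p \<in> space (data_measure \<Otimes>\<^sub>M MU).
    K \<le> real (card {i\<in>J. split_score n0 G p i < split_score n0 G p (Suc n)})}"
  have "(\<lambda>p. real (card {i\<in>J. split_score n0 G p i < split_score n0 G p (Suc n)}))
      \<in> borel_measurable (data_measure \<Otimes>\<^sub>M MU)"
    using split_score_measurable[OF _ _ G_meas] split
    by (intro borel_measurable_card_Collect borel_measurable_less) (auto simp: J_def)
  then have Q: "Q \<in> sets (data_measure \<Otimes>\<^sub>M MU)"
    unfolding Q_def by (rule borel_measurable_le[OF borel_measurable_const])
  have swap_permutes: "Transposition.transpose k (Suc n) permutes {1..Suc n}"
    and swap_J: "Transposition.transpose k (Suc n) permutes J" if "k \<in> J" for k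
    using that split by (auto intro!: permutes_swap_id simp: J_def)
  have swap: "rank_event n0 G K k = {\<omega>\<in>space M. permuted_sample (Transposition.transpose k (Suc n)) \<omega> \<in> Q}"
    if k: "k \<in> J" for k
  proof -
    define \<pi> where "\<pi> = Transposition.transpose k (Suc n)"
    define s where "s \<omega> i = split_score n0 G (permuted_sample id \<omega>) i" for \<omega> i
    have "\<pi> i = i" if "i \<in> {1..n0}" for i
      using that k unfolding \<pi>_def J_def by (auto simp: Transposition.transpose_def)
    then have "split_score n0 G (permuted_sample \<pi> \<omega>) i = s \<omega> (\<pi> i)" if "i \<in> J" for i \<omega>
      using split_score_permuted_sample[OF swap_permutes[OF k, folded \<pi>_def]] that split
      by (simp add: s_def J_def)
    then have "card {i\<in>J. split_score n0 G (permuted_sample \<pi> \<omega>) i < split_score n0 G (permuted_sample \<pi> \<omega>) (Suc n)}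
        = card {i\<in>J. s \<omega> (\<pi> i) < s \<omega> k}" for \<omega>
      using split by (intro arg_cong[where f = card]) (auto simp: J_def \<pi>_def)
    also have "\<dots> \<omega> = card {i\<in>J. s \<omega> i < s \<omega> k}" for \<omega>
      by (rule card_Collect_permutes[OF swap_J[OF k, folded \<pi>_def]])
    finally show ?thesis
      using permuted_sample_measurable[OF swap_permutes[OF k], THEN measurable_space]
      unfolding Q_def \<pi>_def rank_event_def s_def J_def by auto
  qed
  have "Suc n \<in> J" using split by (simp add: J_def)
  show "rank_event n0 G K j \<in> events"
    using measurable_sets[OF permuted_sample_measurable[OF swap_permutes] Q] j
    by (simp add: swap J_def vimage_def Int_def conj_commute)
  show "prob (rank_event n0 G K j) = prob (rank_event n0 G K (Suc n))"
    using prob_permuted_sample[OF swap_permutes Q] j \<open>Suc n \<in> J\<close>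
    by (simp add: swap J_def)
qed

theorem split_conformal_coverage:
  fixes G :: "(nat \<Rightarrow> 'x \<times> real) \<Rightarrow> 'u \<Rightarrow> 'x \<Rightarrow> real \<Rightarrow> real"
  assumes \<alpha>: "0 < \<alpha>" "\<alpha> < 1" and split: "n0 < n"
    and G_meas: "(\<lambda>(d, u, x, y). G d u x y) \<in> borel_measurable
        (PiM {1..n0} (\<lambda>_. MX \<Otimes>\<^sub>M borel) \<Otimes>\<^sub>M (MU \<Otimes>\<^sub>M (MX \<Otimes>\<^sub>M borel)))"
  shows "1 - \<alpha> \<le> prob {\<omega> \<in> space M.
     real (card {i\<in>{n0<..n}. G (\<lambda>i\<in>{1..n0}. (X i \<omega>, Y i \<omega>)) (U \<omega>) (X i \<omega>) (Y i \<omega>)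
        < G (\<lambda>i\<in>{1..n0}. (X i \<omega>, Y i \<omega>)) (U \<omega>) (X (Suc n) \<omega>) (Y (Suc n) \<omega>)})
     < (1 - \<alpha>) * (real (n - n0) + 1)}"
proof -
  define J where "J = {n0<..Suc n}"
  define K where "K = (1 - \<alpha>) * (real (n - n0) + 1)"
  define s where "s i \<omega> = split_score n0 G (permuted_sample id \<omega>) i" for i \<omega>
  have test: "Suc n \<in> J" using split by (simp add: J_def)
  have rank_event_eq: "rank_event n0 G K j = {\<omega>\<in>space M. K \<le> real (card {i\<in>J. s i \<omega> < s j \<omega>})}" for j
    by (simp add: rank_event_def J_def s_def)
  have bound: "real (card J) * prob (rank_event n0 G K (Suc n)) \<le> real (card J) - K"
    unfolding rank_event_eq
  proof (rule prob_high_rank_le)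
    show "finite J" "Suc n \<in> J" "0 < K"
      using \<alpha> split by (simp_all add: J_def K_def)
    have "card J = n - n0 + 1" using split by (simp add: J_def)
    then show "K \<le> real (card J)"
      unfolding K_def using \<alpha> by (simp add: mult_left_le_one_le add.commute)
    show "{\<omega>\<in>space M. K \<le> real (card {i\<in>J. s i \<omega> < s j \<omega>})} \<in> events"
      and "prob {\<omega>\<in>space M. K \<le> real (card {i\<in>J. s i \<omega> < s j \<omega>})}
        = prob {\<omega>\<in>space M. K \<le> real (card {i\<in>J. s i \<omega> < s (Suc n) \<omega>})}" if "j \<in> J" for j
      using rank_event_swap[OF that[unfolded J_def] split G_meas, of K] by (simp_all only: rank_event_eq)
  qed
  have "real (card J) - K = real (card J) * \<alpha>" "0 < real (card J)"
    using split by (simp_all add: J_def K_def algebra_simps)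
  with bound have "prob (rank_event n0 G K (Suc n)) \<le> \<alpha>" by (metis mult_le_cancel_left_pos)
  moreover have "{\<omega> \<in> space M.
     real (card {i\<in>{n0<..n}. G (\<lambda>i\<in>{1..n0}. (X i \<omega>, Y i \<omega>)) (U \<omega>) (X i \<omega>) (Y i \<omega>)
        < G (\<lambda>i\<in>{1..n0}. (X i \<omega>, Y i \<omega>)) (U \<omega>) (X (Suc n) \<omega>) (Y (Suc n) \<omega>)})
     < (1 - \<alpha>) * (real (n - n0) + 1)}
    = space M - rank_event n0 G K (Suc n)"
  proof -
    have "restrict (\<lambda>i\<in>{1..Suc n}. (X i \<omega>, Y i \<omega>)) {1..n0} = (\<lambda>i\<in>{1..n0}. (X i \<omega>, Y i \<omega>))" for \<omega>
      using split by (auto simp: fun_eq_iff)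
    then have "s i \<omega> = G (\<lambda>i\<in>{1..n0}. (X i \<omega>, Y i \<omega>)) (U \<omega>) (X i \<omega>) (Y i \<omega>)" if "i \<in> J" for i \<omega>
      using that unfolding s_def split_score_def permuted_sample_def by (simp add: J_def)
    then have "{i\<in>J. s i \<omega> < s (Suc n) \<omega>} = {i\<in>{n0<..n}.
        G (\<lambda>i\<in>{1..n0}. (X i \<omega>, Y i \<omega>)) (U \<omega>) (X i \<omega>) (Y i \<omega>)
        < G (\<lambda>i\<in>{1..n0}. (X i \<omega>, Y i \<omega>)) (U \<omega>) (X (Suc n) \<omega>) (Y (Suc n) \<omega>)}" for \<omega>
      using test by (auto simp: J_def le_Suc_eq)
    then show ?thesis unfolding rank_event_eq by (auto simp: K_def)
  qed
  ultimately show ?thesis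
    using prob_compl[OF rank_event_swap(1)[OF test[unfolded J_def] split G_meas]] by simp
qed

end

theorem theorem1:
  fixes M :: "'w measure" and MX :: "'x measure" and MU :: "'u measure"
    and X :: "nat \<Rightarrow> 'w \<Rightarrow> 'x" and Y :: "nat \<Rightarrow> 'w \<Rightarrow> real" and U :: "'w \<Rightarrow> 'u"
    and n n0 :: nat and \<alpha> \<alpha>lo \<alpha>hi :: real
    and qhat :: "(nat \<Rightarrow> 'x \<times> real) \<Rightarrow> 'u \<Rightarrow> 'x \<Rightarrow> real \<Rightarrow> real"
    and glo ghi :: "(nat \<Rightarrow> 'x \<times> real) \<Rightarrow> 'u \<Rightarrow> 'x \<Rightarrow> real"
    and B :: nat
    and qb :: "nat \<Rightarrow> (nat \<Rightarrow> 'x \<times> real) \<Rightarrow> 'u \<Rightarrow> 'x \<Rightarrow> real \<Rightarrow> real"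
  assumes P: "prob_space M"
    and alpha: "0 < \<alpha>" "\<alpha> < 1"
    and alo: "0 < \<alpha>lo" "\<alpha>lo < 1" and ahi: "0 < \<alpha>hi" "\<alpha>hi < 1"
    and split: "n0 < n"
    and X_meas: "\<forall>i\<in>{1..Suc n}. X i \<in> measurable M MX"
    and Y_meas: "\<forall>i\<in>{1..Suc n}. Y i \<in> borel_measurable M"
    and U_meas: "U \<in> measurable M MU"
    and exch: "\<forall>\<pi>. \<pi> permutes {1..Suc n} \<longrightarrow>
        distr M (PiM {1..Suc n} (\<lambda>_. MX \<Otimes>\<^sub>M borel))
          (\<lambda>\<omega>. \<lambda>i\<in>{1..Suc n}. (X (\<pi> i) \<omega>, Y (\<pi> i) \<omega>))
        = distr M (PiM {1..Suc n} (\<lambda>_. MX \<Otimes>\<^sub>M borel))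
          (\<lambda>\<omega>. \<lambda>i\<in>{1..Suc n}. (X i \<omega>, Y i \<omega>))"
    and U_indep: "distr M (PiM {1..Suc n} (\<lambda>_. MX \<Otimes>\<^sub>M borel) \<Otimes>\<^sub>M MU)
          (\<lambda>\<omega>. (\<lambda>i\<in>{1..Suc n}. (X i \<omega>, Y i \<omega>), U \<omega>))
        = distr M (PiM {1..Suc n} (\<lambda>_. MX \<Otimes>\<^sub>M borel)) (\<lambda>\<omega>. \<lambda>i\<in>{1..Suc n}. (X i \<omega>, Y i \<omega>))
          \<Otimes>\<^sub>M distr M MU U"
    and q_meas: "\<forall>a. (\<lambda>(d, u, x). qhat d u x a) \<in> borel_measurable
        (PiM {1..n0} (\<lambda>_. MX \<Otimes>\<^sub>M borel) \<Otimes>\<^sub>M (MU \<Otimes>\<^sub>M MX))"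
    and glo_meas: "(\<lambda>(d, u, x). glo d u x) \<in> borel_measurable
        (PiM {1..n0} (\<lambda>_. MX \<Otimes>\<^sub>M borel) \<Otimes>\<^sub>M (MU \<Otimes>\<^sub>M MX))"
    and ghi_meas: "(\<lambda>(d, u, x). ghi d u x) \<in> borel_measurable
        (PiM {1..n0} (\<lambda>_. MX \<Otimes>\<^sub>M borel) \<Otimes>\<^sub>M (MU \<Otimes>\<^sub>M MX))"
    and g_pos: "\<forall>d u x. glo d u x > 0 \<and> ghi d u x > 0"
    and qb_meas: "\<forall>b\<in>{1..B}. \<forall>a. (\<lambda>(d, u, x). qb b d u x a) \<in> borel_measurable
        (PiM {1..n0} (\<lambda>_. MX \<Otimes>\<^sub>M borel) \<Otimes>\<^sub>M (MU \<Otimes>\<^sub>M MX))"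
  shows
    "measure M {\<omega> \<in> space M. Y (Suc n) \<omega> \<in>
        uacqrS_set
          (\<lambda>x. qhat (\<lambda>i\<in>{1..n0}. (X i \<omega>, Y i \<omega>)) (U \<omega>) x \<alpha>lo)
          (\<lambda>x. qhat (\<lambda>i\<in>{1..n0}. (X i \<omega>, Y i \<omega>)) (U \<omega>) x \<alpha>hi)
          (\<lambda>x. glo (\<lambda>i\<in>{1..n0}. (X i \<omega>, Y i \<omega>)) (U \<omega>) x)
          (\<lambda>x. ghi (\<lambda>i\<in>{1..n0}. (X i \<omega>, Y i \<omega>)) (U \<omega>) x)
          n0 n \<alpha> (\<lambda>i. X i \<omega>) (\<lambda>i. Y i \<omega>) (X (Suc n) \<omega>)} \<ge> 1 - \<alpha>
     \<and> measure M {\<omega> \<in> space M. Y (Suc n) \<omega> \<in>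
        uacqrP_set B
          (\<lambda>b x. qb b (\<lambda>i\<in>{1..n0}. (X i \<omega>, Y i \<omega>)) (U \<omega>) x \<alpha>lo)
          (\<lambda>b x. qb b (\<lambda>i\<in>{1..n0}. (X i \<omega>, Y i \<omega>)) (U \<omega>) x \<alpha>hi)
          n0 n \<alpha> (\<lambda>i. X i \<omega>) (\<lambda>i. Y i \<omega>) (X (Suc n) \<omega>)} \<ge> 1 - \<alpha>"
proof -
  interpret exchangeable_sample M MX MU X Y U n
    by (intro exchangeable_sample.intro exchangeable_sample_axioms.intro) (fact P X_meas Y_meas U_meas exch U_indep)+
  have "1 - \<alpha> \<le> prob {\<omega> \<in> space M. real (calib_rank
      (uacqrS_score
          (\<lambda>x. qhat (\<lambda>i\<in>{1..n0}. (X i \<omega>, Y i \<omega>)) (U \<omega>) x \<alpha>lo)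
          (\<lambda>x. qhat (\<lambda>i\<in>{1..n0}. (X i \<omega>, Y i \<omega>)) (U \<omega>) x \<alpha>hi)
          (glo (\<lambda>i\<in>{1..n0}. (X i \<omega>, Y i \<omega>)) (U \<omega>)) (ghi (\<lambda>i\<in>{1..n0}. (X i \<omega>, Y i \<omega>)) (U \<omega>)))
      n0 n (\<lambda>i. X i \<omega>) (\<lambda>i. Y i \<omega>) (X (Suc n) \<omega>) (Y (Suc n) \<omega>)) < (1 - \<alpha>) * (real (n - n0) + 1)}"
    unfolding calib_rank_def
    by (rule split_conformal_coverage[OF alpha split borel_measurable_uacqrS_score[OF
          q_meas[rule_format] q_meas[rule_format] glo_meas ghi_meas]])
  moreover have "1 - \<alpha> \<le> prob {\<omega> \<in> space M. real (calib_rank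
      (uacqrP_score B
          (\<lambda>b x. qb b (\<lambda>i\<in>{1..n0}. (X i \<omega>, Y i \<omega>)) (U \<omega>) x \<alpha>lo)
          (\<lambda>b x. qb b (\<lambda>i\<in>{1..n0}. (X i \<omega>, Y i \<omega>)) (U \<omega>) x \<alpha>hi))
      n0 n (\<lambda>i. X i \<omega>) (\<lambda>i. Y i \<omega>) (X (Suc n) \<omega>) (Y (Suc n) \<omega>)) < (1 - \<alpha>) * (real (n - n0) + 1)}"
    unfolding calib_rank_def
    by (rule split_conformal_coverage[OF alpha split borel_measurable_uacqrP_score[OF
          qb_meas[rule_format] qb_meas[rule_format]]])
  moreover have "\<And>d u x. 0 < glo d u x" "\<And>d u x. 0 < ghi d u x" using g_pos by auto
  ultimately show ?thesis by (simp add: mem_uacqrS_set_iff mem_uacqrP_set_iff alpha)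
qed

end
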